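(* Let $G$ be an arbitrary connected graph on $n$ vertices, let $0<p<\frac{1}{2}$ be a noise parameter and let $0<\delta<\frac{1}{2}$ be a confidence threshold. There exists an adaptive graph searching algorithm (in the noisy graph search model described in the context, with an adversarially fixed target) that, after $$\frac{1}{I(p)}\left(\log_2 n + \mathcal{O}\big(\sqrt{\log n \log \delta^{-1}}\big) + \mathcal{O}(\log \delta^{-1})\right)$$ queries, returns the target correctly with probability at least $1-\delta$, for every choice of the target.
   Context: Noisy graph search model: $G=(V,E)$ is an undirected, unweighted connected graph and $v^*\in V$ is an unknown target. In each step the algorithm queries a vertex $q$. A correct answer is "yes" if $q=v^*$, and otherwise is a neighbor $u$ of $q$ lying on a shortest path from $q$ to $v^*$. Each answer, independently, is erroneous with probability $p$ (in which case it may be an arbitrary different answer); otherwise it is correct. The algorithm is adaptive (queries may depend on previous answers). In the adversarial model the target is fixed before the search by an adversary who knows the algorithm. $H(p)=-p\log_2 p-(1-p)\log_2(1-p)$ and $I(p)=1-H(p)$. *)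

theory Defs
  imports "HOL-Probability.Probability"
begin

definition ugraph :: "'a set \<Rightarrow> ('a \<Rightarrow> 'a \<Rightarrow> bool) \<Rightarrow> bool" where
  "ugraph V E \<longleftrightarrow> finite V \<and> (\<forall>u v. E u v \<longrightarrow> u \<in> V \<and> v \<in> V \<and> u \<noteq> v \<and> E v u)"

inductive walk_len :: "('a \<Rightarrow> 'a \<Rightarrow> bool) \<Rightarrow> 'a \<Rightarrow> 'a \<Rightarrow> nat \<Rightarrow> bool" for E where
  wl_refl: "walk_len E u u 0"
| wl_step: "E u w \<Longrightarrow> walk_len E w v k \<Longrightarrow> walk_len E u v (Suc k)"

definition gconnected :: "'a set \<Rightarrow> ('a \<Rightarrow> 'a \<Rightarrow> bool) \<Rightarrow> bool" where
  "gconnected V E \<longleftrightarrow> V \<noteq> {} \<and> (\<forall>u\<in>V. \<forall>v\<in>V. \<exists>k. walk_len E u v k)"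

definition gdist :: "('a \<Rightarrow> 'a \<Rightarrow> bool) \<Rightarrow> 'a \<Rightarrow> 'a \<Rightarrow> nat" where
  "gdist E u v = (LEAST k. walk_len E u v k)"

text \<open>Answers: None = "yes", Some u = the neighbour u.\<close>
type_synonym 'a answer = "'a option"
type_synonym 'a history = "('a \<times> 'a answer) list"

definition answers :: "('a \<Rightarrow> 'a \<Rightarrow> bool) \<Rightarrow> 'a \<Rightarrow> 'a answer set" where
  "answers E q = insert None (Some ` {u. E q u})"

definition correct_answers :: "('a \<Rightarrow> 'a \<Rightarrow> bool) \<Rightarrow> 'a \<Rightarrow> 'a \<Rightarrow> 'a answer set" where
  "correct_answers E t q =
     (if q = t then {None}
      else Some ` {u. E q u \<and> gdist E u t + 1 = gdist E q t})"

definition valid_alg :: "'a set \<Rightarrow> ('a history \<Rightarrow> 'a pmf) \<Rightarrow> bool" where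
  "valid_alg V alg \<longleftrightarrow> (\<forall>h. set_pmf (alg h) \<subseteq> V)"

text \<open>Adversary for target t: given the history and the current query q it fixes a correct
  answer cor h q (one of the valid correct answers) and the answer err h q that is given
  in case of an error (any answer from the answer alphabet of q).\<close>
definition valid_adv :: "'a set \<Rightarrow> ('a \<Rightarrow> 'a \<Rightarrow> bool) \<Rightarrow> 'a \<Rightarrow>
    ('a history \<Rightarrow> 'a \<Rightarrow> 'a answer) \<Rightarrow> ('a history \<Rightarrow> 'a \<Rightarrow> 'a answer) \<Rightarrow> bool" where
  "valid_adv V E t cor err \<longleftrightarrow>
     (\<forall>h. \<forall>q\<in>V. cor h q \<in> correct_answers E t q \<and> err h q \<in> answers E q)"

fun run :: "('a history \<Rightarrow> 'a pmf) \<Rightarrow> ('a history \<Rightarrow> 'a \<Rightarrow> 'a answer) \<Rightarrow>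
    ('a history \<Rightarrow> 'a \<Rightarrow> 'a answer) \<Rightarrow> real \<Rightarrow> nat \<Rightarrow> 'a history pmf" where
  "run alg cor err p 0 = return_pmf []"
| "run alg cor err p (Suc k) =
     bind_pmf (run alg cor err p k) (\<lambda>h.
     bind_pmf (alg h) (\<lambda>q.
     bind_pmf (bernoulli_pmf p) (\<lambda>b.
     return_pmf (h @ [(q, if b then err h q else cor h q)]))))"

definition success_prob :: "('a history \<Rightarrow> 'a pmf) \<Rightarrow> ('a history \<Rightarrow> 'a pmf) \<Rightarrow>
    ('a history \<Rightarrow> 'a \<Rightarrow> 'a answer) \<Rightarrow> ('a history \<Rightarrow> 'a \<Rightarrow> 'a answer) \<Rightarrow>
    real \<Rightarrow> nat \<Rightarrow> 'a \<Rightarrow> real" where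
  "success_prob alg out cor err p T t =
     measure_pmf.prob (bind_pmf (run alg cor err p T) out) {t}"

definition Hent :: "real \<Rightarrow> real" where
  "Hent p = - p * log 2 p - (1 - p) * log 2 (1 - p)"

definition Icap :: "real \<Rightarrow> real" where
  "Icap p = 1 - Hent p"

end

theory Submission
  imports Defs
begin

text \<open>The searcher uses multiplicative weights. After a history \<open>h\<close> every vertex \<open>v\<close> carries the
  weight \<open>\<Prod> (1 - p or p)\<close>, according to whether each past answer would be correct for the target
  \<open>v\<close>; it queries a weighted 1-median (a vertex minimising the weighted sum of distances) and finally
  outputs a heaviest vertex. At a median no answer is correct for more than half of the weight.
  Hence, writing \<open>x\<close> for the weight of the target and \<open>W\<close> for the rest, concavity of \<open>z powr l\<close>
  shows that the potential \<open>(W / x) powr l\<close> shrinks in expectation by the factor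
  \<open>(1 - p) (2 (1 - p)) powr (- l) + p (2 p) powr (- l) \<le> 1 - l I(p) ln 2 + O(l\<^sup>2)\<close> per query,
  whatever the adversary answers. A wrong output forces the potential to be at least 1, so the
  error probability after \<open>T\<close> queries is at most that factor to the power \<open>T\<close> times \<open>n powr l\<close>.
  Choosing \<open>l \<approx> min c (sqrt (ln (1/\<delta>) / ln n))\<close> gives the stated number of queries.\<close>

section \<open>Elementary inequalities\<close>

lemma exp_le_one_plus_mult_exp: "exp u \<le> 1 + u * exp u" for u :: real
proof -
  have "exp u * (1 - u) \<le> exp u * exp (-u)"
    using exp_ge_add_one_self[of "-u"] by (intro mult_left_mono) auto
  then show ?thesis by (simp add: exp_minus algebra_simps)
qed

lemma exp_le_quadratic_nonpos:
  fixes u :: real assumes "u \<le> 0" shows "exp u \<le> 1 + u + u\<^sup>2"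
proof -
  have "u * exp u \<le> u * (1 + u)"
    using exp_ge_add_one_self[of u] assms by (intro mult_left_mono_neg) auto
  then show ?thesis using exp_le_one_plus_mult_exp[of u] by (simp add: power2_eq_square algebra_simps)
qed

lemma exp_le_quadratic_nonneg:
  fixes u :: real assumes "0 \<le> u" shows "exp u \<le> 1 + u + u\<^sup>2 * exp u"
proof -
  have "u * exp u \<le> u * (1 + u * exp u)"
    using exp_le_one_plus_mult_exp[of u] assms by (intro mult_left_mono) auto
  then show ?thesis using exp_le_one_plus_mult_exp[of u] by (simp add: power2_eq_square algebra_simps)
qed

lemma exp_half_ln: "0 < x \<Longrightarrow> exp (ln x / 2) = sqrt x"
  by (simp flip: ln_sqrt)

lemma powr_le_tangent:
  fixes z z0 l :: real
  assumes "0 < z" "0 < z0" "0 < l" "l \<le> 1"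
  shows "z powr l \<le> z0 powr l + l * z0 powr (l - 1) * (z - z0)"
proof -
  define y where "y = z / z0"
  have y: "0 < y" "z = y * z0" using assms by (simp_all add: y_def)
  have "y powr l * 1 powr (1 - l) \<le> l * y + (1 - l) * 1"
    using Youngs_inequality_0[of l "1 - l" y 1] assms y by simp
  then have "y powr l * z0 powr l \<le> (l * y + (1 - l)) * z0 powr l"
    by (intro mult_right_mono) auto
  also have "\<dots> = z0 powr l + l * (z0 powr l / z0) * (y * z0 - z0)"
    using assms by (simp add: field_simps)
  finally show ?thesis
    using y assms by (simp add: powr_mult powr_diff)
qed

lemma powr_mult_combination:
  fixes a b c l \<alpha> \<beta> :: real
  assumes "0 \<le> c" "0 \<le> a" "0 \<le> b"
  shows "\<alpha> * (c * a) powr l + \<beta> * (c * b) powr l = c powr l * (\<alpha> * a powr l + \<beta> * b powr l)"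
  using assms by (simp add: powr_mult algebra_simps)

section \<open>The contraction factor\<close>

definition capacity_ln :: "real \<Rightarrow> real" where
  "capacity_ln p = (1 - p) * ln (2 * (1 - p)) + p * ln (2 * p)"

lemma capacity_ln_eq_Icap:
  assumes "0 < p" "p < 1" shows "capacity_ln p = ln 2 * Icap p"
proof -
  have "ln (2 * (1 - p)) = ln 2 + ln (1 - p)" "ln (2 * p) = ln 2 + ln p"
    using assms by (intro ln_mult_pos; simp)+
  then show ?thesis
    by (simp add: capacity_ln_def Icap_def Hent_def log_def field_simps)
qed

lemma capacity_ln_ge_square:
  assumes "0 < p" "p < 1/2" shows "(1 - 2*p)\<^sup>2 \<le> 25/2 * capacity_ln p"
proof -
  define u where "u = 1 - 2*p"
  define r where "r = sqrt (1 + u)"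
  have u: "0 < u" "u < 1" using assms by (auto simp: u_def)
  have "r \<le> sqrt ((3/2)\<^sup>2)"
    unfolding r_def using u by (intro real_sqrt_le_mono) (simp add: power2_eq_square)
  then have r: "1 < r" "r\<^sup>2 = 1 + u" "r \<le> 3/2"
    using u by (auto simp: r_def)
  have cap: "capacity_ln p = r\<^sup>2 * ln r + (1 - u) / 2 * ln (1 - u)"
    using r u ln_realpow[of r 2]
    by (simp add: capacity_ln_def u_def mult_2 [symmetric] del: ln_realpow)
  txt \<open>Both logarithms are bounded by \<open>ln y \<ge> 1 - 1/y\<close>; taking \<open>y = sqrt(1+u)\<close>
    rather than \<open>1+u\<close> keeps a second order term \<open>(r - 1)\<^sup>2/2\<close>.\<close>
  have ln_r: "1 - 1/r \<le> ln r"
    using ln_le_minus_one[of "1/r"] r by (simp add: ln_div)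
  have "1 / (1 - u) - 1 = u / (1 - u)"
    using u by (simp add: field_simps)
  then have ln_1u: "- u / (1 - u) \<le> ln (1 - u)"
    using ln_le_minus_one[of "1/(1 - u)"] u by (simp add: ln_div)
  have "r\<^sup>2 * (1 - 1/r) = r\<^sup>2 - r" and "(1 - u) / 2 * (- u / (1 - u)) = - u / 2"
    using r u by (simp_all add: field_simps power2_eq_square)
  then have "r\<^sup>2 - r \<le> r\<^sup>2 * ln r" and "- u / 2 \<le> (1 - u) / 2 * ln (1 - u)"
    using mult_left_mono[OF ln_r, of "r\<^sup>2"] mult_left_mono[OF ln_1u, of "(1 - u) / 2"] u
    by simp_all
  moreover have "(r - 1)\<^sup>2 / 2 = (r\<^sup>2 - r) + - u / 2"
    using r by (simp add: power2_eq_square field_simps)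
  ultimately have "(r - 1)\<^sup>2 / 2 \<le> capacity_ln p"
    unfolding cap by linarith
  moreover have "u\<^sup>2 = (r - 1)\<^sup>2 * (r + 1)\<^sup>2"
    using r by (simp add: power2_eq_square algebra_simps)
  moreover have "(r + 1)\<^sup>2 \<le> (5/2)\<^sup>2"
    using r by (intro power_mono) auto
  ultimately have "u\<^sup>2 \<le> (r - 1)\<^sup>2 * (5/2)\<^sup>2 \<and> (r - 1)\<^sup>2 / 2 \<le> capacity_ln p"
    by (metis mult_left_mono zero_le_power2)
  then show ?thesis by (simp add: u_def power2_eq_square)
qed

lemma capacity_ln_pos:
  assumes "0 < p" "p < 1/2" shows "0 < capacity_ln p"
proof -
  have "0 < (1 - 2*p)\<^sup>2" using assms by simp
  then show ?thesis using capacity_ln_ge_square[OF assms] by linarith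
qed

lemma capacity_ln_le_ln2:
  assumes "0 < p" "p < 1/2" shows "capacity_ln p \<le> ln 2"
proof -
  have "(1 - p) * ln (2 * (1 - p)) + p * ln (2 * p) \<le> (1 - p) * ln 2 + p * ln 2"
    using assms by (intro add_mono mult_left_mono) auto
  then show ?thesis by (simp add: capacity_ln_def algebra_simps)
qed

text \<open>After a query that splits the weight into two halves, the target's share of the weight grows
  by the factor \<open>2 (1 - p)\<close> if the answer is correct (probability \<open>1 - p\<close>) and \<open>2 p\<close> otherwise.\<close>
definition contraction :: "real \<Rightarrow> real \<Rightarrow> real" where
  "contraction p l = (1 - p) * (2 * (1 - p)) powr (- l) + p * (2 * p) powr (- l)"

lemma contraction_nonneg: "0 \<le> p \<Longrightarrow> p \<le> 1 \<Longrightarrow> 0 \<le> contraction p l"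
  by (simp add: contraction_def)

lemma second_moment_le_capacity_ln:
  assumes p: "0 < p" "p < 1/2"
  shows "(1 - p) * (ln (2 * (1 - p)))\<^sup>2 + p * (ln (2 * p))\<^sup>2 / sqrt (2 * p) \<le> 500 * capacity_ln p"
proof -
  define u where "u = 1 - 2 * p"
  define a where "a = ln (2 * (1 - p))"
  define c where "c = ln (1 / (2 * p))"
  define s where "s = 1 / sqrt (2 * p)"
  have u: "0 < u" "u < 1" using p by (auto simp: u_def)
  have a: "0 \<le> a" "a \<le> u"
    using p ln_le_minus_one[of "2 * (1 - p)"] by (auto simp: a_def u_def)
  have c: "0 \<le> c" "c \<le> u / (2 * p)"
    using p ln_le_minus_one[of "1 / (2 * p)"] by (auto simp: c_def u_def field_simps)
  have s: "0 < s" "s\<^sup>2 = 1 / (2 * p)" "exp (c / 2) = s"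
    using p by (auto simp: s_def c_def exp_half_ln ln_div exp_minus power_divide inverse_eq_divide)
  have lhs: "(1 - p) * (ln (2 * (1 - p)))\<^sup>2 + p * (ln (2 * p))\<^sup>2 / sqrt (2 * p)
      = (1 - p) * a\<^sup>2 + p * c\<^sup>2 * s"
    using p by (simp add: a_def c_def s_def ln_div)
  have cap: "u\<^sup>2 \<le> 25/2 * capacity_ln p"
    using capacity_ln_ge_square[OF p] by (simp add: u_def)
  have "(1 - p) * a\<^sup>2 \<le> a\<^sup>2" using p by (simp add: mult_left_le_one_le)
  also have "\<dots> \<le> u\<^sup>2" using a by (intro power_mono) auto
  finally have first: "(1 - p) * a\<^sup>2 \<le> u\<^sup>2" .
  show ?thesis
  proof (cases "p \<ge> 1/4")
    case True
    then have "1 / (2 * p) \<le> 2" using p by (simp add: field_simps)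
    then have "s\<^sup>2 \<le> 2\<^sup>2" using s by simp
    then have "s \<le> 2" using power2_le_imp_le[of s 2] by simp
    moreover have "c\<^sup>2 \<le> (u / (2 * p))\<^sup>2" using c by (intro power_mono)
    ultimately have "p * c\<^sup>2 * s \<le> p * (u / (2 * p))\<^sup>2 * 2"
      using p s by (intro mult_mono mult_left_mono) auto
    also have "\<dots> = u\<^sup>2 / (2 * p)" using p by (simp add: power2_eq_square field_simps)
    also have "\<dots> \<le> 2 * u\<^sup>2"
      using True p mult_right_mono[of 1 "4 * p" "u\<^sup>2"] by (simp add: field_simps)
    finally show ?thesis using lhs first cap zero_le_power2[of u] by linarith
  next
    case False
    txt \<open>Here \<open>c\<close> may be large; \<open>c \<le> 4 exp (c/4)\<close> trades \<open>c\<^sup>2\<close> for the factor \<open>s\<close>.\<close>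
    have "c \<le> 4 * exp (c / 4)" using exp_ge_add_one_self[of "c / 4"] by linarith
    then have "c\<^sup>2 \<le> (4 * exp (c / 4))\<^sup>2" using c by (intro power_mono) auto
    also have "\<dots> = 16 * exp (c / 2)" by (simp add: power2_eq_square flip: exp_add)
    finally have "p * c\<^sup>2 * s \<le> p * (16 * s) * s"
      using p s by (intro mult_right_mono mult_left_mono) auto
    also have "\<dots> = 16 * p * s\<^sup>2" by (simp add: power2_eq_square)
    also have "\<dots> = 8" using p s by simp
    finally have "p * c\<^sup>2 * s \<le> 8" .
    moreover have "(1/2)\<^sup>2 \<le> u\<^sup>2" "u\<^sup>2 \<le> 1"
      using False u by (auto simp: u_def intro: power_mono power_le_one)
    moreover have "(1/2)\<^sup>2 = (1/4 :: real)" by (simp add: power2_eq_square)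
    ultimately show ?thesis using lhs first cap by linarith
  qed
qed

lemma contraction_le:
  assumes p: "0 < p" "p < 1/2" and l: "0 < l" "l \<le> 1/2"
  shows "contraction p l \<le> 1 - l * capacity_ln p + 500 * l\<^sup>2 * capacity_ln p"
proof -
  define a where "a = ln (2 * (1 - p))"
  define c where "c = ln (1 / (2 * p))"
  have ac: "0 \<le> a" "0 \<le> c" using p by (auto simp: a_def c_def)
  have "exp (l * c) \<le> exp (c / 2)" using l ac mult_right_mono[of l "1/2" c] by simp
  also have "exp (c / 2) = 1 / sqrt (2 * p)"
    using p by (simp add: c_def ln_div exp_minus exp_half_ln inverse_eq_divide)
  finally have "(l * c)\<^sup>2 * exp (l * c) \<le> (l * c)\<^sup>2 * (1 / sqrt (2 * p))"
    by (intro mult_left_mono) auto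
  then have exp_c: "exp (l * c) \<le> 1 + l * c + (l * c)\<^sup>2 * (1 / sqrt (2 * p))"
    using exp_le_quadratic_nonneg[of "l * c"] l ac by simp
  have exp_a: "exp (- (l * a)) \<le> 1 - l * a + (l * a)\<^sup>2"
    using exp_le_quadratic_nonpos[of "- (l * a)"] l ac by simp
  have "contraction p l = (1 - p) * exp (- (l * a)) + p * exp (l * c)"
    using p by (simp add: contraction_def powr_def a_def c_def ln_div)
  also have "\<dots> \<le> (1 - p) * (1 - l * a + (l * a)\<^sup>2) + p * (1 + l * c + (l * c)\<^sup>2 * (1 / sqrt (2 * p)))"
    using exp_a exp_c p by (intro add_mono mult_left_mono) auto
  also have "\<dots> = 1 - l * capacity_ln p
      + l\<^sup>2 * ((1 - p) * (ln (2 * (1 - p)))\<^sup>2 + p * (ln (2 * p))\<^sup>2 / sqrt (2 * p))"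
    using p by (simp add: capacity_ln_def a_def c_def ln_div power2_eq_square algebra_simps)
  also have "\<dots> \<le> 1 - l * capacity_ln p + l\<^sup>2 * (500 * capacity_ln p)"
    using second_moment_le_capacity_ln[OF p] by (intro add_left_mono mult_left_mono) auto
  finally show ?thesis by simp
qed

lemma contraction_le_exp:
  assumes "0 < p" "p < 1/2" "0 < l" "l \<le> 1/2"
  shows "contraction p l \<le> exp (- (l * capacity_ln p * (1 - 500 * l)))"
proof -
  have "contraction p l \<le> 1 + - (l * capacity_ln p * (1 - 500 * l))"
    using contraction_le[OF assms] by (simp add: power2_eq_square algebra_simps)
  also have "\<dots> \<le> exp (- (l * capacity_ln p * (1 - 500 * l)))"
    by (rule exp_ge_add_one_self)
  finally show ?thesis .
qed

lemma split_powr_le_contraction: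
  assumes p: "0 < p" "p < 1/2" and l: "0 < l" "l \<le> 1" and s: "0 \<le> s" "s \<le> 1/2"
  shows "(1 - p) * ((p + (1 - 2*p) * s) / (1 - p)) powr l
       + p * ((p + (1 - 2*p) * (1 - s)) / p) powr l \<le> contraction p l"
proof -
  define z1 where "z1 = (p + (1 - 2*p) * s) / (1 - p)"
  define z2 where "z2 = (p + (1 - 2*p) * (1 - s)) / p"
  define y1 where "y1 = 1 / (2 * (1 - p))"
  define y2 where "y2 = 1 / (2 * p)"
  txt \<open>At \<open>s = 1/2\<close> the left-hand side equals \<open>contraction p l\<close>; bound both powers by their
    tangents there, and the linear remainder has the sign of \<open>s - 1/2\<close>.\<close>
  have z: "0 < z1" "0 < z2"
    using p s by (auto simp: z1_def z2_def intro!: divide_pos_pos add_pos_nonneg)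
  have y: "0 < y1" "y1 \<le> y2" using p by (simp_all add: y1_def y2_def field_simps)
  have "(1 - p) * z1 powr l + p * z2 powr l
      \<le> (1 - p) * (y1 powr l + l * y1 powr (l - 1) * (z1 - y1))
        + p * (y2 powr l + l * y2 powr (l - 1) * (z2 - y2))"
    using powr_le_tangent[of z1 y1 l] powr_le_tangent[of z2 y2 l] z y p l
    by (intro add_mono mult_left_mono) auto
  also have "\<dots> = (1 - p) * y1 powr l + p * y2 powr l
      + l * y1 powr (l - 1) * ((1 - p) * (z1 - y1)) + l * y2 powr (l - 1) * (p * (z2 - y2))"
    by (simp add: algebra_simps)
  also have "(1 - p) * (z1 - y1) = (1 - 2*p) * (s - 1/2)"
  proof -
    have "(1 - p) * z1 = p + (1 - 2*p) * s" "(1 - p) * y1 = 1/2"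
      using p by (simp_all add: z1_def y1_def)
    then show ?thesis by (simp add: right_diff_distrib algebra_simps)
  qed
  also have "p * (z2 - y2) = (1 - 2*p) * (1/2 - s)"
  proof -
    have "p * z2 = p + (1 - 2*p) * (1 - s)" "p * y2 = 1/2"
      using p by (simp_all add: z2_def y2_def)
    then show ?thesis by (simp add: right_diff_distrib algebra_simps)
  qed
  also have "(1 - p) * y1 powr l + p * y2 powr l = contraction p l"
    using p by (simp add: contraction_def y1_def y2_def powr_divide powr_minus_divide)
  also have "contraction p l + l * y1 powr (l - 1) * ((1 - 2*p) * (s - 1/2))
      + l * y2 powr (l - 1) * ((1 - 2*p) * (1/2 - s))
      = contraction p l - l * (1 - 2*p) * (1/2 - s) * (y1 powr (l - 1) - y2 powr (l - 1))"
    by (simp add: algebra_simps)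
  also have "\<dots> \<le> contraction p l"
    using powr_mono2'[of "l - 1" y1 y2] y l p s by (simp add: mult_nonneg_nonneg)
  finally show ?thesis by (simp add: z1_def z2_def)
qed

lemma weighted_split_le_contraction:
  assumes p: "0 < p" "p < 1/2" and l: "0 < l" "l \<le> 1" and x: "0 < x"
    and T: "0 \<le> Tc" "0 \<le> Te" "2 * Tc \<le> W" "Tc + Te \<le> W"
  shows "(1 - p) * ((p * W + (1 - 2*p) * Tc) / ((1 - p) * x)) powr l
       + p * ((p * W + (1 - 2*p) * Te) / (p * x)) powr l \<le> contraction p l * (W / x) powr l"
proof (cases "W = 0")
  case True
  then have "Tc = 0" "Te = 0" using T by auto
  then show ?thesis using True by simp
next
  case False
  then have W: "0 < W" using T by simp
  define s where "s = Tc / W"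
  have s: "0 \<le> s" "s \<le> 1/2" using T W by (auto simp: s_def field_simps)
  have first: "(p * W + (1 - 2*p) * Tc) / ((1 - p) * x) = W / x * ((p + (1 - 2*p) * s) / (1 - p))"
    using W x p by (simp add: s_def field_simps)
  have "(p * W + (1 - 2*p) * Te) / (p * x) \<le> W / x * ((p + (1 - 2*p) * (1 - s)) / p)"
  proof -
    have "(1 - 2*p) * Te \<le> (1 - 2*p) * (W - Tc)" using T p by (intro mult_left_mono) auto
    then have "p * W + (1 - 2*p) * Te \<le> W * (p + (1 - 2*p) * (1 - s))"
      using W by (simp add: s_def algebra_simps)
    then have "(p * W + (1 - 2*p) * Te) / (p * x) \<le> W * (p + (1 - 2*p) * (1 - s)) / (p * x)"
      using p x by (intro divide_right_mono) auto
    then show ?thesis by (simp add: mult.commute)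
  qed
  then have second: "((p * W + (1 - 2*p) * Te) / (p * x)) powr l
      \<le> (W / x * ((p + (1 - 2*p) * (1 - s)) / p)) powr l"
    using p x T l by (intro powr_mono2) auto
  have "(1 - p) * ((p * W + (1 - 2*p) * Tc) / ((1 - p) * x)) powr l
       + p * ((p * W + (1 - 2*p) * Te) / (p * x)) powr l
     \<le> (1 - p) * (W / x * ((p + (1 - 2*p) * s) / (1 - p))) powr l
       + p * (W / x * ((p + (1 - 2*p) * (1 - s)) / p)) powr l"
    unfolding first using second p by (intro add_mono mult_left_mono) auto
  also have "\<dots> = (W / x) powr l * ((1 - p) * ((p + (1 - 2*p) * s) / (1 - p)) powr l
       + p * ((p + (1 - 2*p) * (1 - s)) / p) powr l)"
    using W x p s by (intro powr_mult_combination) simp_all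
  also have "\<dots> \<le> (W / x) powr l * contraction p l"
    using split_powr_le_contraction[OF p l s] by (intro mult_left_mono) auto
  finally show ?thesis by (simp add: mult.commute)
qed

section \<open>Weighted medians in graphs\<close>

lemma walk_len_gdist:
  assumes "gconnected V E" "u \<in> V" "v \<in> V"
  shows "walk_len E u v (gdist E u v)"
proof -
  obtain k where "walk_len E u v k" using assms unfolding gconnected_def by blast
  then show ?thesis unfolding gdist_def by (rule LeastI)
qed

lemma gdist_le_walk_len: "walk_len E u v k \<Longrightarrow> gdist E u v \<le> k"
  unfolding gdist_def by (rule Least_le)

lemma gdist_neighbour_le:
  assumes "ugraph V E" "gconnected V E" "E q u" "v \<in> V"
  shows "gdist E u v \<le> gdist E q v + 1"
proof -
  have "q \<in> V" "E u q" using assms unfolding ugraph_def by auto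
  then have "walk_len E u v (Suc (gdist E q v))"
    using walk_len_gdist[OF assms(2) _ assms(4)] by (auto intro: wl_step)
  then show ?thesis using gdist_le_walk_len by fastforce
qed

lemma Some_in_correct_answers_iff:
  "Some u \<in> correct_answers E v q \<longleftrightarrow> v \<noteq> q \<and> E q u \<and> gdist E u v + 1 = gdist E q v"
  unfolding correct_answers_def by auto

lemma None_in_correct_answers_iff: "None \<in> correct_answers E v q \<longleftrightarrow> v = q"
  unfolding correct_answers_def by auto

definition answer_mass :: "('a \<Rightarrow> 'a \<Rightarrow> bool) \<Rightarrow> ('a \<Rightarrow> real) \<Rightarrow> 'a set \<Rightarrow> 'a \<Rightarrow> 'a answer \<Rightarrow> real" where
  "answer_mass E w S q A = (\<Sum>v\<in>S. if A \<in> correct_answers E v q then w v else 0)"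

definition dist_sum :: "('a \<Rightarrow> 'a \<Rightarrow> bool) \<Rightarrow> ('a \<Rightarrow> real) \<Rightarrow> 'a set \<Rightarrow> 'a \<Rightarrow> real" where
  "dist_sum E w V q = (\<Sum>v\<in>V. w v * real (gdist E q v))"

lemma answer_mass_nonneg: "(\<And>v. 0 \<le> w v) \<Longrightarrow> 0 \<le> answer_mass E w S q A"
  by (simp add: answer_mass_def sum_nonneg)

lemma answer_mass_le_sum: "(\<And>v. 0 \<le> w v) \<Longrightarrow> answer_mass E w S q A \<le> sum w S"
  by (simp add: answer_mass_def sum_mono)

text \<open>Moving the query from \<open>q\<close> to its neighbour \<open>u\<close> brings every vertex answered by \<open>u\<close>
  one step closer and no vertex more than one step further away.\<close>
lemma median_answer_mass_le:
  assumes G: "ugraph V E" "gconnected V E" and w: "\<And>v. 0 \<le> w v"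
    and median: "\<And>u'. u' \<in> V \<Longrightarrow> dist_sum E w V q \<le> dist_sum E w V u'"
  shows "2 * answer_mass E w V q (Some u) \<le> sum w V"
proof (cases "E q u")
  case False
  then have "answer_mass E w V q (Some u) = 0"
    by (simp add: answer_mass_def Some_in_correct_answers_iff)
  then show ?thesis using w by (simp add: sum_nonneg)
next
  case True
  define S where "S v = (if Some u \<in> correct_answers E v q then w v else 0)" for v
  have "w v * real (gdist E u v) \<le> w v * real (gdist E q v) + w v - 2 * S v" if "v \<in> V" for v
  proof (cases "Some u \<in> correct_answers E v q")
    case True
    then have "real (gdist E q v) = real (gdist E u v) + 1"
      by (auto simp: Some_in_correct_answers_iff)
    then show ?thesis using True by (simp add: S_def algebra_simps)
  next
    case False
    have "w v * real (gdist E u v) \<le> w v * (real (gdist E q v) + 1)"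
      using gdist_neighbour_le[OF G True that] w by (intro mult_left_mono) auto
    then show ?thesis using False by (simp add: S_def algebra_simps)
  qed
  then have "dist_sum E w V u \<le> (\<Sum>v\<in>V. w v * real (gdist E q v) + w v - 2 * S v)"
    unfolding dist_sum_def by (intro sum_mono)
  also have "\<dots> = dist_sum E w V q + sum w V - 2 * answer_mass E w V q (Some u)"
    by (simp add: dist_sum_def answer_mass_def S_def sum.distrib sum_subtractf sum_distrib_left)
  finally show ?thesis
    using median[of u] G(1) True unfolding ugraph_def by auto
qed

lemma answer_mass_Some_None_le:
  assumes "\<And>v. 0 \<le> w v"
  shows "answer_mass E w S q (Some u) + answer_mass E w S q None \<le> sum w S"
proof -
  have "answer_mass E w S q (Some u) + answer_mass E w S q None
      = (\<Sum>v\<in>S. (if Some u \<in> correct_answers E v q then w v else 0)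
                + (if None \<in> correct_answers E v q then w v else 0))"
    by (simp add: answer_mass_def sum.distrib)
  also have "\<dots> \<le> sum w S"
    using assms by (intro sum_mono) (auto simp: Some_in_correct_answers_iff None_in_correct_answers_iff)
  finally show ?thesis .
qed

lemma median_answer_masses:
  assumes G: "ugraph V E" "gconnected V E" and w: "\<And>v. 0 \<le> w v"
    and median: "\<And>u'. u' \<in> V \<Longrightarrow> dist_sum E w V q \<le> dist_sum E w V u'"
    and t: "t \<in> V" and c: "c \<in> correct_answers E t q"
  shows "2 * answer_mass E w (V - {t}) q c \<le> sum w (V - {t})"
    and "answer_mass E w (V - {t}) q c + answer_mass E w (V - {t}) q e \<le> sum w (V - {t})"
proof -
  have fin: "finite V" using G(1) unfolding ugraph_def by simp
  have split: "answer_mass E w V q A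
      = (if A \<in> correct_answers E t q then w t else 0) + answer_mass E w (V - {t}) q A" for A
    unfolding answer_mass_def using fin t by (simp add: sum.remove)
  have total: "sum w V = w t + sum w (V - {t})"
    using fin t by (simp add: sum.remove)
  have half: "2 * answer_mass E w V q (Some u) \<le> w t + sum w (V - {t})" for u
    using median_answer_mass_le[OF G w median] total by simp
  have sub: "answer_mass E w (V - {t}) q A \<le> answer_mass E w V q A" for A
    using split[of A] w[of t] by simp
  have "2 * answer_mass E w (V - {t}) q c \<le> sum w (V - {t})
      \<and> answer_mass E w (V - {t}) q c + answer_mass E w (V - {t}) q e \<le> sum w (V - {t})"
  proof (cases c)
    case None
    then have "answer_mass E w (V - {t}) q c = 0"
      using c by (simp add: answer_mass_def None_in_correct_answers_iff)
    then show ?thesis using answer_mass_le_sum[OF w] w by (simp add: sum_nonneg)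
  next
    case (Some u)
    txt \<open>The correct answer also points towards \<open>t\<close>, so \<open>t\<close> is on its side of the median.\<close>
    have c_half: "2 * answer_mass E w (V - {t}) q c \<le> sum w (V - {t}) - w t"
      using half[of u] split[of c] c Some by simp
    moreover have "answer_mass E w (V - {t}) q e \<le> (w t + sum w (V - {t})) / 2 \<or>
        answer_mass E w (V - {t}) q c + answer_mass E w (V - {t}) q e \<le> sum w (V - {t})"
    proof (cases e)
      case None
      then show ?thesis using answer_mass_Some_None_le[where w = w, OF w] Some by simp
    next
      case (Some u')
      then show ?thesis using half[of u'] sub[of e] by simp
    qed
    ultimately show ?thesis using w[of t] by argo
  qed
  then show "2 * answer_mass E w (V - {t}) q c \<le> sum w (V - {t})"
    and "answer_mass E w (V - {t}) q c + answer_mass E w (V - {t}) q e \<le> sum w (V - {t})"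
    by auto
qed

section \<open>Weights and the potential\<close>

definition answer_lik :: "('a \<Rightarrow> 'a \<Rightarrow> bool) \<Rightarrow> real \<Rightarrow> 'a \<Rightarrow> 'a answer \<Rightarrow> 'a \<Rightarrow> real" where
  "answer_lik E p q A v = (if A \<in> correct_answers E v q then 1 - p else p)"

definition weight :: "('a \<Rightarrow> 'a \<Rightarrow> bool) \<Rightarrow> real \<Rightarrow> 'a history \<Rightarrow> 'a \<Rightarrow> real" where
  "weight E p h v = prod_list (map (\<lambda>(q, A). answer_lik E p q A v) h)"

lemma weight_Nil [simp]: "weight E p [] v = 1"
  by (simp add: weight_def)

lemma weight_snoc [simp]: "weight E p (h @ [(q, A)]) v = weight E p h v * answer_lik E p q A v"
  by (simp add: weight_def)

lemma weight_pos: "0 < p \<Longrightarrow> p < 1 \<Longrightarrow> 0 < weight E p h v"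
  by (induction h rule: rev_induct) (auto simp: answer_lik_def)

lemma sum_weight_snoc:
  "(\<Sum>v\<in>S. weight E p (h @ [(q, A)]) v)
     = p * sum (weight E p h) S + (1 - 2*p) * answer_mass E (weight E p h) S q A"
proof -
  have "weight E p (h @ [(q, A)]) v
      = p * weight E p h v + (1 - 2*p) * (if A \<in> correct_answers E v q then weight E p h v else 0)" for v
    by (simp add: answer_lik_def algebra_simps)
  then show ?thesis
    by (simp add: answer_mass_def sum.distrib sum_distrib_left)
qed

definition potential :: "'a set \<Rightarrow> ('a \<Rightarrow> 'a \<Rightarrow> bool) \<Rightarrow> real \<Rightarrow> real \<Rightarrow> 'a \<Rightarrow> 'a history \<Rightarrow> real" where
  "potential V E p l t h = (sum (weight E p h) (V - {t}) / weight E p h t) powr l"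

lemma potential_nonneg: "0 \<le> potential V E p l t h"
  by (simp add: potential_def)

lemma potential_contraction:
  assumes G: "ugraph V E" "gconnected V E" and p: "0 < p" "p < 1/2" and l: "0 < l" "l \<le> 1"
    and t: "t \<in> V"
    and median: "\<And>u. u \<in> V \<Longrightarrow> dist_sum E (weight E p h) V q \<le> dist_sum E (weight E p h) V u"
    and c: "c \<in> correct_answers E t q"
  shows "p * potential V E p l t (h @ [(q, e)]) + (1 - p) * potential V E p l t (h @ [(q, c)])
         \<le> contraction p l * potential V E p l t h"
proof -
  define w where "w = weight E p h"
  define W where "W = sum w (V - {t})"
  define mass where "mass A = answer_mass E w (V - {t}) q A" for A
  have w: "0 < w v" for v using weight_pos[of p] p by (simp add: w_def)
  have w0: "0 \<le> w v" for v using w less_imp_le by blast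
  have "dist_sum E w V q \<le> dist_sum E w V u" if "u \<in> V" for u
    using median that by (simp add: w_def)
  then have masses: "0 \<le> mass c" "0 \<le> mass e" "2 * mass c \<le> W" "mass c + mass e \<le> W"
    using median_answer_masses[where w = w, OF G w0 _ t c] answer_mass_nonneg[where w = w, OF w0]
    unfolding mass_def W_def by blast+
  have after_c: "potential V E p l t (h @ [(q, c)]) = ((p * W + (1 - 2*p) * mass c) / ((1 - p) * w t)) powr l"
    using c unfolding potential_def sum_weight_snoc
    by (simp add: answer_lik_def W_def mass_def w_def mult.commute)
  define N where "N = p * W + (1 - 2*p) * mass e"
  have N: "0 \<le> N" using masses p by (simp add: N_def)
  have e_pos: "0 < weight E p (h @ [(q, e)]) t" using weight_pos[of p] p by (simp del: weight_snoc)
  have "p * w t \<le> weight E p (h @ [(q, e)]) t"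
    using w[of t] p by (simp add: answer_lik_def w_def mult.commute)
  then have "N / weight E p (h @ [(q, e)]) t \<le> N / (p * w t)"
    using N p w[of t] e_pos by (intro divide_left_mono mult_pos_pos) (auto simp del: weight_snoc)
  moreover have "potential V E p l t (h @ [(q, e)]) = (N / weight E p (h @ [(q, e)]) t) powr l"
    unfolding potential_def sum_weight_snoc N_def W_def mass_def w_def ..
  ultimately have after_e: "potential V E p l t (h @ [(q, e)]) \<le> (N / (p * w t)) powr l"
    using N e_pos l by (auto intro: powr_mono2)
  have "p * potential V E p l t (h @ [(q, e)]) + (1 - p) * potential V E p l t (h @ [(q, c)])
      \<le> (1 - p) * ((p * W + (1 - 2*p) * mass c) / ((1 - p) * w t)) powr l
        + p * ((p * W + (1 - 2*p) * mass e) / (p * w t)) powr l"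
    using after_e p unfolding after_c N_def by (simp add: mult_left_mono)
  also have "\<dots> \<le> contraction p l * (W / w t) powr l"
    using weighted_split_le_contraction[OF p l w masses] .
  finally show ?thesis by (simp add: potential_def W_def w_def)
qed

section \<open>Runs and the median search\<close>

lemma nn_integral_run_le:
  fixes f :: "'a history \<Rightarrow> real"
  assumes p: "0 \<le> p" "p \<le> 1" and r: "0 \<le> r" and f: "\<And>h. 0 \<le> f h"
    and contraction: "\<And>h q. q \<in> set_pmf (alg h) \<Longrightarrow>
      p * f (h @ [(q, err h q)]) + (1 - p) * f (h @ [(q, cor h q)]) \<le> r * f h"
  shows "(\<integral>\<^sup>+h. ennreal (f h) \<partial>run alg cor err p k) \<le> ennreal (r ^ k * f [])"
proof (induction k)
  case 0
  then show ?case by simp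
next
  case (Suc k)
  have step: "(\<integral>\<^sup>+q. \<integral>\<^sup>+b. ennreal (f (h @ [(q, if b then err h q else cor h q)])) \<partial>bernoulli_pmf p \<partial>alg h)
      \<le> ennreal (r * f h)" for h
  proof -
    have "(\<integral>\<^sup>+q. \<integral>\<^sup>+b. ennreal (f (h @ [(q, if b then err h q else cor h q)])) \<partial>bernoulli_pmf p \<partial>alg h)
        = (\<integral>\<^sup>+q. ennreal (p * f (h @ [(q, err h q)]) + (1 - p) * f (h @ [(q, cor h q)])) \<partial>alg h)"
      using p f by (intro nn_integral_cong) (simp add: ennreal_plus ennreal_mult mult.commute)
    also have "\<dots> \<le> (\<integral>\<^sup>+q. ennreal (r * f h) \<partial>alg h)"
      using contraction by (intro nn_integral_mono_AE) (auto simp: AE_measure_pmf_iff intro: ennreal_leI)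
    also have "\<dots> = ennreal (r * f h)"
      by (simp add: measure_pmf.emeasure_space_1)
    finally show ?thesis .
  qed
  have "(\<integral>\<^sup>+h. ennreal (f h) \<partial>run alg cor err p (Suc k))
      = (\<integral>\<^sup>+h. \<integral>\<^sup>+q. \<integral>\<^sup>+b. ennreal (f (h @ [(q, if b then err h q else cor h q)]))
            \<partial>bernoulli_pmf p \<partial>alg h \<partial>run alg cor err p k)"
    by simp
  also have "\<dots> \<le> (\<integral>\<^sup>+h. ennreal r * ennreal (f h) \<partial>run alg cor err p k)"
    using step r f by (intro nn_integral_mono) (simp add: ennreal_mult)
  also have "\<dots> = ennreal r * (\<integral>\<^sup>+h. ennreal (f h) \<partial>run alg cor err p k)"
    by (rule nn_integral_cmult) simp
  also have "\<dots> \<le> ennreal r * ennreal (r ^ k * f [])"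
    using Suc.IH by (rule mult_left_mono) simp
  also have "\<dots> = ennreal (r ^ Suc k * f [])"
    using r f by (simp add: ennreal_mult[symmetric] mult.assoc)
  finally show ?case .
qed

lemma prob_run_le:
  fixes f :: "'a history \<Rightarrow> real"
  assumes p: "0 \<le> p" "p \<le> 1" and r: "0 \<le> r" and f: "\<And>h. 0 \<le> f h"
    and contraction: "\<And>h q. q \<in> set_pmf (alg h) \<Longrightarrow>
      p * f (h @ [(q, err h q)]) + (1 - p) * f (h @ [(q, cor h q)]) \<le> r * f h"
    and B: "\<And>h. h \<in> B \<Longrightarrow> 1 \<le> f h"
  shows "measure_pmf.prob (run alg cor err p k) B \<le> r ^ k * f []"
proof -
  have "emeasure (run alg cor err p k) B = (\<integral>\<^sup>+h. indicator B h \<partial>run alg cor err p k)"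
    by simp
  also have "\<dots> \<le> (\<integral>\<^sup>+h. ennreal (f h) \<partial>run alg cor err p k)"
    using B f by (intro nn_integral_mono) (auto simp: indicator_def)
  also have "\<dots> \<le> ennreal (r ^ k * f [])"
    by (rule nn_integral_run_le[OF p r f contraction])
  finally show ?thesis
    using r f by (simp add: measure_pmf.emeasure_eq_measure)
qed

lemma success_prob_return_pmf:
  "success_prob alg (\<lambda>h. return_pmf (g h)) cor err p T t
     = 1 - measure_pmf.prob (run alg cor err p T) {h. g h \<noteq> t}"
proof -
  have "success_prob alg (\<lambda>h. return_pmf (g h)) cor err p T t
      = measure_pmf.prob (run alg cor err p T) (UNIV - {h. g h \<noteq> t})"
    by (simp add: success_prob_def measure_map_pmf flip: map_pmf_def) (simp add: vimage_def set_diff_eq)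
  then show ?thesis
    using measure_pmf.prob_compl[of "{h. g h \<noteq> t}" "run alg cor err p T"] by simp
qed

lemma arg_max_on_greatest:
  fixes f :: "'a \<Rightarrow> 'b :: linorder"
  assumes "finite S" "S \<noteq> {}"
  shows "arg_max_on f S \<in> S \<and> (\<forall>y\<in>S. f y \<le> f (arg_max_on f S))"
proof -
  have "Max (f ` S) \<in> f ` S" using assms by simp
  then obtain x where "x \<in> S" "f x = Max (f ` S)" by auto
  then show ?thesis
    unfolding arg_max_on_def
    by (intro arg_maxI[of "\<lambda>x. x \<in> S" x f "\<lambda>z. z \<in> S \<and> (\<forall>y\<in>S. f y \<le> f z)"])
      (use assms in \<open>auto simp: not_less\<close>)
qed

definition median :: "'a set \<Rightarrow> ('a \<Rightarrow> 'a \<Rightarrow> bool) \<Rightarrow> real \<Rightarrow> 'a history \<Rightarrow> 'a" where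
  "median V E p h = arg_min_on (dist_sum E (weight E p h) V) V"

lemma median_in: "finite V \<Longrightarrow> V \<noteq> {} \<Longrightarrow> median V E p h \<in> V"
  unfolding median_def by (rule arg_min_if_finite(1))

lemma median_minimal:
  "finite V \<Longrightarrow> u \<in> V \<Longrightarrow> dist_sum E (weight E p h) V (median V E p h) \<le> dist_sum E (weight E p h) V u"
  unfolding median_def by (rule arg_min_least) auto

definition heaviest :: "'a set \<Rightarrow> ('a \<Rightarrow> 'a \<Rightarrow> bool) \<Rightarrow> real \<Rightarrow> 'a history \<Rightarrow> 'a" where
  "heaviest V E p h = arg_max_on (weight E p h) V"

lemma one_le_potential:
  assumes "finite V" "0 < p" "p < 1" "0 \<le> l" "t \<in> V" "heaviest V E p h \<noteq> t"
  shows "1 \<le> potential V E p l t h"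
proof -
  have heavy: "heaviest V E p h \<in> V" "weight E p h t \<le> weight E p h (heaviest V E p h)"
    using arg_max_on_greatest[of V "weight E p h"] assms by (auto simp: heaviest_def)
  note heavy(2)
  also have "\<dots> \<le> sum (weight E p h) (V - {t})"
    using assms heavy weight_pos[of p E h] by (intro member_le_sum) (simp_all add: less_imp_le)
  finally have "1 \<le> sum (weight E p h) (V - {t}) / weight E p h t"
    using weight_pos[of p E h t] assms by simp
  then show ?thesis
    unfolding potential_def using assms(4) by (rule ge_one_powr_ge_zero)
qed

lemma median_search_failure_le:
  assumes G: "ugraph V E" "gconnected V E" and p: "0 < p" "p < 1/2" and l: "0 < l" "l \<le> 1"
    and t: "t \<in> V" and adv: "valid_adv V E t cor err"
  shows "measure_pmf.prob (run (\<lambda>h. return_pmf (median V E p h)) cor err p k) {h. heaviest V E p h \<noteq> t}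
         \<le> contraction p l ^ k * real (card V - 1) powr l"
proof -
  have V: "finite V" "V \<noteq> {}" using G unfolding ugraph_def gconnected_def by auto
  have contr: "p * potential V E p l t (h @ [(q, err h q)]) + (1 - p) * potential V E p l t (h @ [(q, cor h q)])
      \<le> contraction p l * potential V E p l t h"
    if "q \<in> set_pmf (return_pmf (median V E p h))" for h q
  proof -
    have q: "q \<in> V" "\<And>u. u \<in> V \<Longrightarrow> dist_sum E (weight E p h) V q \<le> dist_sum E (weight E p h) V u"
      using that median_in[OF V] median_minimal[OF V(1)] by auto
    then have "cor h q \<in> correct_answers E t q"
      using adv unfolding valid_adv_def by blast
    then show ?thesis using potential_contraction[OF G p l t q(2)] by blast
  qed
  have "measure_pmf.prob (run (\<lambda>h. return_pmf (median V E p h)) cor err p k) {h. heaviest V E p h \<noteq> t}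
      \<le> contraction p l ^ k * potential V E p l t []"
    using p l V t by (intro prob_run_le[where f = "potential V E p l t", OF _ _ _ potential_nonneg contr])
      (auto simp: contraction_nonneg one_le_potential)
  also have "potential V E p l t [] = real (card V - 1) powr l"
    using V t by (simp add: potential_def)
  finally show ?thesis .
qed

section \<open>Choice of the parameters\<close>

lemma step_size_exists:
  fixes K L D :: real
  assumes K: "0 < K" and L: "0 \<le> L" and D: "0 < D"
  shows "\<exists>l>0. l \<le> 1 / (4*K) \<and>
    (L + D / l) * (1 + 2*K*l) \<le> L + (1 + 2*K) * sqrt (L * D) + (6*K + 8*K\<^sup>2) * D"
proof (cases "L \<le> 16 * K\<^sup>2 * D")
  case True
  have "(L + D / (1 / (4*K))) * (1 + 2*K * (1 / (4*K))) = L + L / 2 + 6 * K * D"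
    using K by (simp add: field_simps)
  also have "\<dots> \<le> L + (1 + 2*K) * sqrt (L * D) + (6*K + 8*K\<^sup>2) * D"
  proof -
    have "L / 2 \<le> 8 * K\<^sup>2 * D" "0 \<le> (1 + 2*K) * sqrt (L * D)"
      using True K L D by simp_all
    then show ?thesis by (simp add: distrib_right)
  qed
  finally show ?thesis using K by (intro exI[of _ "1 / (4*K)"]) auto
next
  case False
  define l where "l = sqrt (D / L)"
  have "0 < 16 * K\<^sup>2 * D" using K D by simp
  then have L_pos: "0 < L" using False by linarith
  have "D / L < (1 / (4*K))\<^sup>2"
    using False K L_pos by (simp add: field_simps power2_eq_square)
  then have "l < sqrt ((1 / (4*K))\<^sup>2)"
    unfolding l_def by (rule real_sqrt_less_mono)
  then have l_small: "l < 1 / (4*K)" using K by simp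
  have l: "0 < l" "D / l = sqrt (L * D)" "l * L = sqrt (L * D)"
    using L_pos D by (auto simp: l_def real_sqrt_divide real_sqrt_mult field_simps)
  have "(L + D / l) * (1 + 2*K*l) = L + (1 + 2*K) * sqrt (L * D) + 2 * K * D"
    using l by (simp add: field_simps)
  also have "\<dots> \<le> L + (1 + 2*K) * sqrt (L * D) + (6*K + 8*K\<^sup>2) * D"
    using K D by (intro add_left_mono mult_right_mono) auto
  finally show ?thesis using l l_small by auto
qed

lemma contraction_power_le:
  assumes p: "0 < p" "p < 1/2" and l: "0 < l" "l \<le> 1/2000" and L: "0 \<le> L" and D: "0 \<le> D"
    and T: "(L + D / l) * (1 + 1000 * l) \<le> real T * capacity_ln p"
  shows "contraction p l ^ T * exp (l * L) \<le> exp (- D)"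
proof -
  define m where "m = capacity_ln p"
  have "1 \<le> (1 + 1000 * l) * (1 - 500 * l)"
    using l by (simp add: algebra_simps power2_eq_square mult_right_mono)
  then have "l * L + D \<le> (l * L + D) * ((1 + 1000 * l) * (1 - 500 * l))"
    using l L D mult_left_mono[of 1 "(1 + 1000 * l) * (1 - 500 * l)" "l * L + D"] by simp
  also have "\<dots> = l * (L + D / l) * (1 + 1000 * l) * (1 - 500 * l)"
    using l by (simp add: distrib_left)
  also have "\<dots> \<le> l * (real T * m) * (1 - 500 * l)"
    using T l by (simp add: m_def mult_left_mono mult_right_mono)
  finally have key: "l * L + D \<le> real T * (l * m * (1 - 500 * l))"
    by (simp add: algebra_simps)
  have "contraction p l ^ T \<le> exp (- (l * m * (1 - 500 * l))) ^ T"
    using contraction_le_exp[OF p l(1)] contraction_nonneg[of p l] p l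
    by (intro power_mono) (auto simp: m_def)
  also have "\<dots> = exp (- (real T * (l * m * (1 - 500 * l))))"
    by (simp flip: exp_of_nat_mult)
  finally have "contraction p l ^ T * exp (l * L) \<le> exp (- (real T * (l * m * (1 - 500 * l)))) * exp (l * L)"
    by (intro mult_right_mono) auto
  also have "\<dots> \<le> exp (- D)"
    using key by (simp flip: exp_add)
  finally show ?thesis .
qed

lemma budget_in_bits:
  fixes L D :: real
  assumes L: "0 \<le> L" and D: "0 \<le> D" and m: "m = ln 2 * I" "0 < m"
  shows "(L + 1001 * sqrt (L * D) + 2003001 * D) / m
    \<le> 1 / I * (L / ln 2 + 4000000 * sqrt (L * D) + 4000000 * D)"
proof -
  have ln2: "2/3 \<le> ln (2::real)" by (rule ln2_ge_two_thirds)
  have I: "0 < I" using m ln2 by (simp add: zero_less_mult_iff)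
  have c: "1001 / ln 2 \<le> (4000000::real)" "2003001 / ln 2 \<le> (4000000::real)"
    using ln2 by (simp_all add: field_simps)
  have "1001 / ln 2 * sqrt (L * D) \<le> 4000000 * sqrt (L * D)" "2003001 / ln 2 * D \<le> 4000000 * D"
    using mult_right_mono[OF c(1), of "sqrt (L * D)"] mult_right_mono[OF c(2), of D] L D by simp_all
  then have le: "L / ln 2 + 1001 / ln 2 * sqrt (L * D) + 2003001 / ln 2 * D
      \<le> L / ln 2 + 4000000 * sqrt (L * D) + 4000000 * D"
    by linarith
  have eq: "(L + 1001 * sqrt (L * D) + 2003001 * D) / m
      = 1 / I * (L / ln 2 + 1001 / ln 2 * sqrt (L * D) + 2003001 / ln 2 * D)"
    by (simp add: m(1) add_divide_distrib mult.commute)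
  show ?thesis
    unfolding eq using le I by (intro mult_left_mono) auto
qed

lemma query_budget:
  fixes n :: nat and p \<delta> :: real
  assumes n: "1 \<le> n" and p: "0 < p" "p < 1/2" and \<delta>: "0 < \<delta>" "\<delta> < 1/2"
  shows "\<exists>T l. 0 < l \<and> l \<le> 1 \<and> contraction p l ^ T * real n powr l \<le> \<delta> \<and>
    real T \<le> 1 / Icap p * (log 2 (real n) + 4000000 * sqrt (ln (real n) * ln (1/\<delta>))
                              + 4000000 * ln (1/\<delta>))"
proof -
  define L where "L = ln (real n)"
  define D where "D = ln (1/\<delta>)"
  define m where "m = capacity_ln p"
  have L: "0 \<le> L" using n by (simp add: L_def)
  have ln2: "2/3 \<le> ln (2::real)" by (rule ln2_ge_two_thirds)
  have D: "ln 2 < D" unfolding D_def using \<delta> by (simp add: field_simps)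
  have m: "0 < m" "m \<le> ln 2" "m = ln 2 * Icap p"
    using capacity_ln_pos[OF p] capacity_ln_le_ln2[OF p] capacity_ln_eq_Icap[of p] p
    by (simp_all add: m_def)
  obtain l where l: "0 < l" "l \<le> 1/2000"
    and l_budget: "(L + D / l) * (1 + 1000 * l) \<le> L + 1001 * sqrt (L * D) + 2003000 * D"
    using step_size_exists[of 500 L D] L D ln2 by (auto simp: power2_eq_square)
  define T where "T = nat \<lceil>(L + D / l) * (1 + 1000 * l) / m\<rceil>"
  have "0 \<le> (L + D / l) * (1 + 1000 * l) / m" using L D l m ln2 by simp
  then have T: "(L + D / l) * (1 + 1000 * l) / m \<le> real T"
      "real T \<le> (L + D / l) * (1 + 1000 * l) / m + 1"
    unfolding T_def by linarith+
  have "contraction p l ^ T * real n powr l = contraction p l ^ T * exp (l * L)"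
    using n by (simp add: powr_def L_def)
  also have "\<dots> \<le> exp (- D)"
    using contraction_power_le[OF p l L] D ln2 T(1) m by (simp add: m_def pos_divide_le_eq)
  also have "\<dots> = \<delta>" using \<delta> by (simp add: D_def ln_div)
  finally have success: "contraction p l ^ T * real n powr l \<le> \<delta>" .
  have "m \<le> D" using D m(2) by linarith
  then have "1 \<le> D / m" using m(1) by simp
  then have "real T \<le> (L + 1001 * sqrt (L * D) + 2003000 * D) / m + D / m"
    using T(2) divide_right_mono[OF l_budget, of m] m(1) by linarith
  also have "\<dots> = (L + 1001 * sqrt (L * D) + 2003001 * D) / m"
    using m(1) by (simp add: field_simps)
  also have "\<dots> \<le> 1 / Icap p * (log 2 (real n) + 4000000 * sqrt (L * D) + 4000000 * D)"
    using budget_in_bits[OF L _ m(3) m(1)] D ln2 by (simp add: L_def log_def)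
  finally show ?thesis
    using success l unfolding L_def D_def by (intro exI[of _ T] exI[of _ l]) auto
qed

lemma median_search_succeeds:
  fixes V :: "'a set" and n :: nat and p \<delta> :: real
  assumes G: "ugraph V E" "gconnected V E" and n: "card V = n"
    and p: "0 < p" "p < 1/2" and \<delta>: "0 < \<delta>" "\<delta> < 1/2"
  shows "\<exists>T alg out.
    real T \<le> 1 / Icap p * (log 2 (real n) + 4000000 * sqrt (ln (real n) * ln (1/\<delta>)) + 4000000 * ln (1/\<delta>))
    \<and> valid_alg V alg
    \<and> (\<forall>t\<in>V. \<forall>cor err. valid_adv V E t cor err \<longrightarrow> 1 - \<delta> \<le> success_prob alg out cor err p T t)"
proof -
  have V: "finite V" "V \<noteq> {}" using G unfolding ugraph_def gconnected_def by auto
  then have "1 \<le> n" using n card_gt_0_iff[of V] by linarith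
  then obtain T l where l: "0 < l" "l \<le> 1" and small: "contraction p l ^ T * real n powr l \<le> \<delta>"
    and T: "real T \<le> 1 / Icap p * (log 2 (real n) + 4000000 * sqrt (ln (real n) * ln (1/\<delta>))
                                     + 4000000 * ln (1/\<delta>))"
    using query_budget[OF _ p \<delta>] by blast
  have "valid_alg V (\<lambda>h. return_pmf (median V E p h))"
    using median_in[OF V] by (simp add: valid_alg_def)
  moreover have "1 - \<delta> \<le> success_prob (\<lambda>h. return_pmf (median V E p h))
      (\<lambda>h. return_pmf (heaviest V E p h)) cor err p T t"
    if t: "t \<in> V" and adv: "valid_adv V E t cor err" for t cor err
  proof -
    have "measure_pmf.prob (run (\<lambda>h. return_pmf (median V E p h)) cor err p T) {h. heaviest V E p h \<noteq> t}
        \<le> contraction p l ^ T * real (card V - 1) powr l"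
      by (rule median_search_failure_le[OF G p l t adv])
    also have "\<dots> \<le> contraction p l ^ T * real n powr l"
      using n l p by (intro mult_left_mono powr_mono2 zero_le_power contraction_nonneg) auto
    finally show ?thesis using small by (simp add: success_prob_return_pmf)
  qed
  ultimately show ?thesis using T by blast
qed

theorem theorem1:
  "\<exists>C>0. \<forall>(V::'a set) E n p \<delta>.
     ugraph V E \<and> gconnected V E \<and> card V = n \<and> 0 < p \<and> p < 1/2 \<and> 0 < \<delta> \<and> \<delta> < 1/2 \<longrightarrow>
     (\<exists>T alg out.
        real T \<le> (1 / Icap p) * (log 2 (real n) + C * sqrt (ln (real n) * ln (1/\<delta>)) + C * ln (1/\<delta>))
        \<and> valid_alg V alg
        \<and> (\<forall>t\<in>V. \<forall>cor err. valid_adv V E t cor err \<longrightarrow>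
              success_prob alg out cor err p T t \<ge> 1 - \<delta>))"
  by (intro exI[of _ "4000000 :: real"] conjI allI impI) (simp, blast intro: median_search_succeeds)

end
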